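(* Let $X_1,\dots,X_n$ be variables with ranges $D_1,\dots,D_n$ and let $A_1,\dots,A_m$ be events (sets of full assignments), $A_i$ depending only on the variables indexed by $\mathrm{vbl}(A_i)\subseteq[n]$, with dependency graph $G$ on $[m]$ (distinct $i,j$ adjacent iff $\mathrm{vbl}(A_i)\cap\mathrm{vbl}(A_j)\neq\emptyset$). Let $\sigma$ be an assignment and let $\sigma'$ be another assignment such that $\mathrm{Bad}(\sigma')\subseteq\mathrm{Res}(\sigma)$ and $\sigma,\sigma'$ agree on all variables in $\mathrm{vbl}(\mathrm{Res}(\sigma))$. Then $\mathrm{Res}(\sigma')=\mathrm{Res}(\sigma)$.
   Context: Notation: $\mathrm{Bad}(\sigma)=\{i:\sigma\in A_i\}$; for $S\subseteq[m]$, $\partial S=\{i\notin S:\ i\text{ adjacent in }G\text{ to some }j\in S\}$ and $\mathrm{vbl}(S)=\bigcup_{i\in S}\mathrm{vbl}(A_i)$. We write $A_i\cap\sigma_S=\emptyset$ if either $\mathrm{vbl}(A_i)\cap\mathrm{vbl}(S)=\emptyset$, or no assignment agreeing with $\sigma$ on $\mathrm{vbl}(A_i)\cap\mathrm{vbl}(S)$ belongs to $A_i$; otherwise $A_i\cap\sigma_S\ne\emptyset$. $\mathrm{Res}(\sigma)$ is the output of the procedure: start with $R=\mathrm{Bad}(\sigma)$, $N=\emptyset$; while $\partial R\setminus N\neq\emptyset$, for each $i\in\partial R\setminus N$ (with $R$ the current set), put $i$ into $R$ if $A_i\cap\sigma_R\ne\emptyset$ and into $N$ otherwise; finally output $R$.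 *)

theory Defs
  imports Main "HOL-Library.FuncSet" "HOL-Library.While_Combinator"
begin

text \<open>Variables are indexed by j < n with ranges D j; events are indexed by i < m.
 A (full) assignment is an element of PiE {..<n} D.\<close>

definition assignments :: "nat \<Rightarrow> (nat \<Rightarrow> 'a set) \<Rightarrow> (nat \<Rightarrow> 'a) set" where
  "assignments n D = PiE {..<n} D"

definition dep_adj :: "(nat \<Rightarrow> nat set) \<Rightarrow> nat \<Rightarrow> nat \<Rightarrow> bool" where
  "dep_adj vbl i j \<longleftrightarrow> i \<noteq> j \<and> vbl i \<inter> vbl j \<noteq> {}"

definition Bad :: "nat \<Rightarrow> (nat \<Rightarrow> ('v \<Rightarrow> 'a) set) \<Rightarrow> ('v \<Rightarrow> 'a) \<Rightarrow> nat set" where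
  "Bad m A \<sigma> = {i. i < m \<and> \<sigma> \<in> A i}"

definition bdry :: "nat \<Rightarrow> (nat \<Rightarrow> nat set) \<Rightarrow> nat set \<Rightarrow> nat set" where
  "bdry m vbl S = {i. i < m \<and> i \<notin> S \<and> (\<exists>j\<in>S. dep_adj vbl i j)}"

definition vblS :: "(nat \<Rightarrow> nat set) \<Rightarrow> nat set \<Rightarrow> nat set" where
  "vblS vbl S = (\<Union>i\<in>S. vbl i)"

text \<open>The relation A_i \<inter> \<sigma>_S \<noteq> \<emptyset>.\<close>
definition meets :: "nat \<Rightarrow> (nat \<Rightarrow> 'a set) \<Rightarrow> (nat \<Rightarrow> nat set) \<Rightarrow> (nat \<Rightarrow> (nat \<Rightarrow> 'a) set)
    \<Rightarrow> nat \<Rightarrow> (nat \<Rightarrow> 'a) \<Rightarrow> nat set \<Rightarrow> bool" where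
  "meets n D vbl A i \<sigma> S \<longleftrightarrow>
     vbl i \<inter> vblS vbl S \<noteq> {} \<and>
     (\<exists>\<tau>\<in>assignments n D. (\<forall>j\<in>vbl i \<inter> vblS vbl S. \<tau> j = \<sigma> j) \<and> \<tau> \<in> A i)"

definition res_step :: "nat \<Rightarrow> nat \<Rightarrow> (nat \<Rightarrow> 'a set) \<Rightarrow> (nat \<Rightarrow> nat set) \<Rightarrow> (nat \<Rightarrow> (nat \<Rightarrow> 'a) set)
    \<Rightarrow> (nat \<Rightarrow> 'a) \<Rightarrow> nat set \<times> nat set \<Rightarrow> nat set \<times> nat set" where
  "res_step n m D vbl A \<sigma> RN = (case RN of (R, N) \<Rightarrow>
     (R \<union> {i \<in> bdry m vbl R - N. meets n D vbl A i \<sigma> R},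
      N \<union> {i \<in> bdry m vbl R - N. \<not> meets n D vbl A i \<sigma> R}))"

definition Res :: "nat \<Rightarrow> nat \<Rightarrow> (nat \<Rightarrow> 'a set) \<Rightarrow> (nat \<Rightarrow> nat set) \<Rightarrow> (nat \<Rightarrow> (nat \<Rightarrow> 'a) set)
    \<Rightarrow> (nat \<Rightarrow> 'a) \<Rightarrow> nat set" where
  "Res n m D vbl A \<sigma> =
     fst (the (while_option (\<lambda>(R, N). bdry m vbl R - N \<noteq> {})
                            (res_step n m D vbl A \<sigma>) (Bad m A \<sigma>, {})))"

end

theory Submission
  imports Defs
begin

text \<open>The procedure only ever inspects \<open>\<sigma>\<close> on \<open>vbl(R)\<close> for the current set \<open>R\<close>, and \<open>R\<close> only
  grows until it reaches \<open>Res(\<sigma>)\<close>. Hence if \<open>\<sigma>'\<close> agrees with \<open>\<sigma>\<close> on \<open>vbl(Res(\<sigma>))\<close>, every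
  round of the procedure for \<open>\<sigma>'\<close> coincides with the corresponding round for \<open>\<sigma>\<close>.
  The runs also start alike: a bad event of either assignment lies in \<open>Res(\<sigma>)\<close>, and there
  both assignments agree on its variables, so \<open>Bad(\<sigma>') = Bad(\<sigma>)\<close>.\<close>

lemma while_option_mono:
  fixes f :: "'s \<Rightarrow> 'b::order"
  assumes "\<And>x. f x \<le> f (c x)" and "while_option b c s = Some t"
  shows "f s \<le> f t"
  by (rule while_option_rule[where P = "\<lambda>y. f s \<le> f y", OF _ assms(2)])
    (auto intro: order_trans assms(1))

lemma while_option_cong_reached:
  assumes result: "while_option b c s = Some t"
    and same_step: "\<And>x. while_option b c x = Some t \<Longrightarrow> b x \<Longrightarrow> c' x = c x"
  shows "while_option b c' s = Some t"
proof -
  have "map_option id (while_option b c s) = while_option b c' (id s)"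
    by (rule while_option_commute_invariant[where P = "\<lambda>x. while_option b c x = Some t"])
      (use result same_step in \<open>auto simp: while_option_unfold[of b c]\<close>)
  then show ?thesis using result by (simp add: option.map_id)
qed

lemma fst_res_step_mono: "fst x \<subseteq> fst (res_step n m D vbl A \<sigma> x)"
  by (cases x) (auto simp: res_step_def)

text \<open>Every round that does not stop moves some \<open>i < m\<close> out of the undecided events.\<close>
lemma res_step_terminates:
  assumes "R \<subseteq> {..<m}" and "N \<subseteq> {..<m}"
  shows "\<exists>t. while_option (\<lambda>(R, N). bdry m vbl R - N \<noteq> {}) (res_step n m D vbl A \<sigma>) (R, N) = Some t"
proof (rule measure_while_option_Some[where P = "\<lambda>(R, N). R \<subseteq> {..<m} \<and> N \<subseteq> {..<m}"
      and f = "\<lambda>(R, N). card ({..<m} - (R \<union> N))"])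
  fix s :: "nat set \<times> nat set"
  obtain R N where s: "s = (R, N)" by fastforce
  assume "case s of (R, N) \<Rightarrow> R \<subseteq> {..<m} \<and> N \<subseteq> {..<m}"
    and "case s of (R, N) \<Rightarrow> bdry m vbl R - N \<noteq> {}"
  then obtain i where i: "i \<in> bdry m vbl R - N" and RN: "R \<subseteq> {..<m}" "N \<subseteq> {..<m}"
    using s by auto
  obtain R' N' where step: "res_step n m D vbl A \<sigma> (R, N) = (R', N')"
    and R': "R' = R \<union> {i \<in> bdry m vbl R - N. meets n D vbl A i \<sigma> R}"
    and N': "N' = N \<union> {i \<in> bdry m vbl R - N. \<not> meets n D vbl A i \<sigma> R}"
    by (simp add: res_step_def)
  have bdry_sub: "bdry m vbl R \<subseteq> {..<m}" and "i \<notin> R"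
    using i by (auto simp: bdry_def)
  have "{..<m} - (R' \<union> N') \<subset> {..<m} - (R \<union> N)"
    using i \<open>i \<notin> R\<close> bdry_sub unfolding R' N' by auto
  then have "card ({..<m} - (R' \<union> N')) < card ({..<m} - (R \<union> N))"
    by (simp add: psubset_card_mono)
  moreover have "R' \<subseteq> {..<m}" "N' \<subseteq> {..<m}"
    using RN bdry_sub unfolding R' N' by auto
  ultimately show "(case res_step n m D vbl A \<sigma> s of (R, N) \<Rightarrow> R \<subseteq> {..<m} \<and> N \<subseteq> {..<m}) \<and>
      (case res_step n m D vbl A \<sigma> s of (R, N) \<Rightarrow> card ({..<m} - (R \<union> N)))
        < (case s of (R, N) \<Rightarrow> card ({..<m} - (R \<union> N)))"
    unfolding s step by simp
qed (use assms in simp)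

lemma res_step_agree:
  assumes "R \<subseteq> S" and "\<forall>j\<in>vblS vbl S. \<sigma>' j = \<sigma> j"
  shows "res_step n m D vbl A \<sigma>' (R, N) = res_step n m D vbl A \<sigma> (R, N)"
proof -
  have "vblS vbl R \<subseteq> vblS vbl S" using assms(1) by (auto simp: vblS_def)
  then have "meets n D vbl A i \<sigma>' R = meets n D vbl A i \<sigma> R" for i
    using assms(2) unfolding meets_def by (metis IntD2 subsetD)
  then show ?thesis by (simp add: res_step_def)
qed

lemma Bad_agree:
  assumes A_dep: "\<forall>i<m. \<forall>\<tau>\<in>assignments n D. \<forall>\<tau>'\<in>assignments n D.
                    (\<forall>j\<in>vbl i. \<tau> j = \<tau>' j) \<longrightarrow> (\<tau> \<in> A i \<longleftrightarrow> \<tau>' \<in> A i)"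
    and "\<sigma> \<in> assignments n D" and "\<sigma>' \<in> assignments n D"
    and "Bad m A \<sigma> \<union> Bad m A \<sigma>' \<subseteq> S" and "\<forall>j\<in>vblS vbl S. \<sigma>' j = \<sigma> j"
  shows "Bad m A \<sigma>' = Bad m A \<sigma>"
proof -
  have "\<sigma>' \<in> A i \<longleftrightarrow> \<sigma> \<in> A i" if "i < m" "i \<in> S" for i
  proof -
    have "\<forall>j\<in>vbl i. \<sigma>' j = \<sigma> j" using that assms(5) by (auto simp: vblS_def)
    then show ?thesis using A_dep[rule_format, OF \<open>i < m\<close> assms(3,2)] by simp
  qed
  then show ?thesis using assms(4) unfolding Bad_def by blast
qed

theorem lemma24:
  fixes n m :: nat
    and D :: "nat \<Rightarrow> 'a set"
    and vbl :: "nat \<Rightarrow> nat set"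
    and A :: "nat \<Rightarrow> (nat \<Rightarrow> 'a) set"
    and \<sigma> \<sigma>' :: "nat \<Rightarrow> 'a"
  assumes vbl_sub: "\<forall>i<m. vbl i \<subseteq> {..<n}"
    and A_sub: "\<forall>i<m. A i \<subseteq> assignments n D"
    and A_dep: "\<forall>i<m. \<forall>\<tau>\<in>assignments n D. \<forall>\<tau>'\<in>assignments n D.
                  (\<forall>j\<in>vbl i. \<tau> j = \<tau>' j) \<longrightarrow> (\<tau> \<in> A i \<longleftrightarrow> \<tau>' \<in> A i)"
    and \<sigma>: "\<sigma> \<in> assignments n D"
    and \<sigma>': "\<sigma>' \<in> assignments n D"
    and bad: "Bad m A \<sigma>' \<subseteq> Res n m D vbl A \<sigma>"
    and agree: "\<forall>j\<in>vblS vbl (Res n m D vbl A \<sigma>). \<sigma>' j = \<sigma> j"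
  shows "Res n m D vbl A \<sigma>' = Res n m D vbl A \<sigma>"
proof -
  let ?b = "\<lambda>(R, N). bdry m vbl R - N \<noteq> {}"
  obtain t where run: "while_option ?b (res_step n m D vbl A \<sigma>) (Bad m A \<sigma>, {}) = Some t"
    using res_step_terminates[of "Bad m A \<sigma>" m "{}" vbl n D A \<sigma>] by (auto simp: Bad_def)
  have Res: "Res n m D vbl A \<sigma> = fst t"
    unfolding Res_def run by simp
  have "Bad m A \<sigma> \<subseteq> fst t"
    using while_option_mono[where f = fst, OF fst_res_step_mono run] by simp
  then have "Bad m A \<sigma>' = Bad m A \<sigma>"
    using Bad_agree[OF A_dep \<sigma> \<sigma>'] bad agree unfolding Res by blast
  moreover have "while_option ?b (res_step n m D vbl A \<sigma>') (Bad m A \<sigma>, {}) = Some t"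
  proof (rule while_option_cong_reached[OF run])
    fix x assume "while_option ?b (res_step n m D vbl A \<sigma>) x = Some t"
    then have "fst x \<subseteq> fst t" by (rule while_option_mono[where f = fst, OF fst_res_step_mono])
    then show "res_step n m D vbl A \<sigma>' x = res_step n m D vbl A \<sigma> x"
      using res_step_agree[of "fst x" "fst t" vbl \<sigma>' \<sigma>] agree unfolding Res
      by (cases x) simp
  qed
  ultimately show ?thesis
    unfolding Res unfolding Res_def by simp
qed

end
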